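(* Let $\Phi$ be a Young function such that the limits $p_0=\lim_{t\to0^+}\frac{t\Phi'(t)}{\Phi(t)}$ and $p_\infty=\lim_{t\to\infty}\frac{t\Phi'(t)}{\Phi(t)}$ exist as finite real numbers. Let $p=\max\{p_0,p_\infty\}$ and $q=\min\{p_0,p_\infty\}$. Then for every $\varepsilon>0$ there exists a Young function $\Psi$ equivalent to $\Phi$ with $p\le p_\Psi<p+\varepsilon$ and $q-\varepsilon<q_\Psi\le q$.
   Context: A Young function is a convex function $\Phi:[0,\infty)\to[0,\infty)$ with $\Phi(0)=0$, $\Phi(t)>0$ for $t>0$, and $\lim_{t\to\infty}\Phi(t)=\infty$. $\Phi'$ denotes the right derivative of $\Phi$. The Lebesgue exponents of $\Phi$ are $p_\Phi=\sup_{t>0}\frac{t\Phi'(t)}{\Phi(t)}$ and $q_\Phi=\inf_{t>0}\frac{t\Phi'(t)}{\Phi(t)}$. Two Young functions $\Phi,\Psi$ are equivalent if there is $C\ge1$ with $C^{-1}\Psi(t)\le\Phi(t)\le C\Psi(t)$ for all $t\ge0$. *)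

theory Defs
  imports "HOL-Analysis.Analysis"
begin

text \<open>Young function on [0,\<infinity>), represented as a real function whose values
  on negative arguments are irrelevant.\<close>
definition young_function :: "(real \<Rightarrow> real) \<Rightarrow> bool" where
  "young_function \<Phi> \<longleftrightarrow> convex_on {0..} \<Phi> \<and> \<Phi> 0 = 0 \<and> (\<forall>t>0. \<Phi> t > 0)
     \<and> filterlim \<Phi> at_top at_top"

definition right_deriv :: "(real \<Rightarrow> real) \<Rightarrow> real \<Rightarrow> real" where
  "right_deriv f t = Lim (at_right 0) (\<lambda>h. (f (t + h) - f t) / h)"

text \<open>Lebesgue exponents (as extended reals, since the supremum may be infinite).\<close>
definition upper_index :: "(real \<Rightarrow> real) \<Rightarrow> ereal" where
  "upper_index \<Phi> = (SUP t\<in>{0<..}. ereal (t * right_deriv \<Phi> t / \<Phi> t))"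

definition lower_index :: "(real \<Rightarrow> real) \<Rightarrow> ereal" where
  "lower_index \<Phi> = (INF t\<in>{0<..}. ereal (t * right_deriv \<Phi> t / \<Phi> t))"

definition young_equiv :: "(real \<Rightarrow> real) \<Rightarrow> (real \<Rightarrow> real) \<Rightarrow> bool" where
  "young_equiv \<Phi> \<Psi> \<longleftrightarrow> (\<exists>C\<ge>1. \<forall>t\<ge>0. \<Psi> t / C \<le> \<Phi> t \<and> \<Phi> t \<le> C * \<Psi> t)"

end

theory Submission
  imports Defs
begin

(* Write r(t) = t \<Phi>'(t) / \<Phi>(t) for the growth index of \<Phi>; the Lebesgue exponents are its sup
   and inf. Near 0 and near infinity r is close to p0 and pinf, so only a compact middle range
   [a, b] needs repair. Take G(t) = t^\<alpha> (1 + t)^(\<beta> - \<alpha>) with \<alpha> = p0 + \<delta> and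
   \<beta> = max 1 (pinf - \<delta>): it is convex, its growth index (\<alpha> + \<beta> t) / (1 + t) lies between \<alpha>
   and \<beta>, and the power bounds on \<Phi> given by the limits of r yield G = o(\<Phi>) at 0 and
   G = O(\<Phi>) at infinity (even G = o(\<Phi>) unless \<beta> = pinf). Hence \<Psi> = \<Phi> + K G is a Young
   function equivalent to \<Phi> whose growth index is the mean of r and the index of G with weights
   \<Phi> and K G. This mean still tends to p0 at 0 and to pinf at infinity, and for K large it stays
   within \<delta> of the index of G on [a, b]; so the index of \<Psi> stays between min p0 pinf - 2\<delta>
   and max p0 pinf + 2\<delta>. *)

definition growth_index :: "(real \<Rightarrow> real) \<Rightarrow> real \<Rightarrow> real" where
  "growth_index \<Phi> t = t * right_deriv \<Phi> t / \<Phi> t"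

lemma young_function_convex: "young_function \<Phi> \<Longrightarrow> convex_on {0..} \<Phi>"
  by (simp add: young_function_def)

lemma young_function_zero: "young_function \<Phi> \<Longrightarrow> \<Phi> 0 = 0"
  by (simp add: young_function_def)

lemma young_function_pos: "young_function \<Phi> \<Longrightarrow> 0 < t \<Longrightarrow> 0 < \<Phi> t"
  by (simp add: young_function_def)

lemma young_function_nonneg: "young_function \<Phi> \<Longrightarrow> 0 \<le> t \<Longrightarrow> 0 \<le> \<Phi> t"
  by (cases "t = 0") (auto simp: young_function_def intro: less_imp_le)

lemma young_function_continuous_on: "young_function \<Phi> \<Longrightarrow> continuous_on {0<..} \<Phi>"
  by (rule convex_on_continuous) (auto simp: young_function_def intro: convex_on_subset)

lemma convex_on_secant_mono:
  fixes f :: "real \<Rightarrow> real"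
  assumes f: "convex_on I f" and I: "x \<in> I" "z \<in> I" and xyz: "x < y" "y < z"
  shows "(f y - f x) / (y - x) \<le> (f z - f x) / (z - x)"
    and "(f z - f x) / (z - x) \<le> (f z - f y) / (z - y)"
proof -
  have swap: "(a - b) / (c - d) = (b - a) / (d - c)" for a b c d :: real
    by (metis minus_diff_eq minus_divide_divide)
  show "(f y - f x) / (y - x) \<le> (f z - f x) / (z - x)"
    using convex_on_slope_le(1)[OF f I xyz] by (simp only: swap)
  show "(f z - f x) / (z - x) \<le> (f z - f y) / (z - y)"
    using convex_on_slope_le(2)[OF f I xyz] by (simp only: swap)
qed

lemma young_function_mono:
  assumes Y: "young_function \<Phi>" and st: "0 \<le> s" "s \<le> t"
  shows "\<Phi> s \<le> \<Phi> t"
proof (cases "s = 0 \<or> s = t")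
  case False
  with st have "0 < s" "s < t" by auto
  have "(\<Phi> t - \<Phi> 0) / (t - 0) \<le> (\<Phi> t - \<Phi> s) / (t - s)"
    using convex_on_secant_mono(2)[OF young_function_convex[OF Y], of 0 t s] \<open>0 < s\<close> \<open>s < t\<close> by simp
  moreover have "0 \<le> (\<Phi> t - \<Phi> 0) / (t - 0)"
    using young_function_nonneg[OF Y, of t] young_function_zero[OF Y] st by simp
  ultimately have "0 \<le> (\<Phi> t - \<Phi> s) / (t - s)" by (rule order_trans[rotated])
  then show ?thesis using \<open>s < t\<close> by (simp add: zero_le_divide_iff)
qed (use st young_function_nonneg[OF Y, of t] in \<open>auto simp: young_function_zero[OF Y]\<close>)

lemma right_deriv_eqI:
  "((\<lambda>h. (f (t + h) - f t) / h) \<longlongrightarrow> D) (at_right 0) \<Longrightarrow> right_deriv f t = D"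
  unfolding right_deriv_def by (rule tendsto_Lim) (auto simp: trivial_limit_at_right_real)

lemma convex_on_right_deriv:
  fixes f :: "real \<Rightarrow> real"
  assumes f: "convex_on {0..} f" and t: "0 < t"
  shows "((\<lambda>h. (f (t + h) - f t) / h) \<longlongrightarrow> right_deriv f t) (at_right 0)"
    and "\<And>h. 0 < h \<Longrightarrow> right_deriv f t \<le> (f (t + h) - f t) / h"
    and "\<And>s. 0 \<le> s \<Longrightarrow> s < t \<Longrightarrow> (f t - f s) / (t - s) \<le> right_deriv f t"
proof -
  define q where "q h = (f (t + h) - f t) / h" for h
  have q_mono: "q h \<le> q h'" if "0 < h" "h < h'" for h h'
    using convex_on_secant_mono(1)[OF f, of t "t + h'" "t + h"] t that by (simp add: q_def)
  have secant_le_q: "(f t - f s) / (t - s) \<le> q h" if "0 \<le> s" "s < t" "0 < h" for s h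
    using convex_on_secant_mono[OF f, of s "t + h" t] t that by (simp add: q_def)
  define L where "L = Inf (q ` {0<..})"
  have bdd: "bdd_below (q ` {0<..})"
    using secant_le_q[of 0] t unfolding bdd_below_def by blast
  have L_le: "L \<le> q h" if "0 < h" for h
    unfolding L_def using bdd that by (auto intro: cInf_lower)
  have lim: "(q \<longlongrightarrow> L) (at_right 0)"
  proof (rule tendstoI)
    fix e :: real assume "0 < e"
    then obtain h0 where h0: "0 < h0" "q h0 < L + e"
      using cInf_lessD[of "q ` {0<..}" "L + e"] unfolding L_def by auto
    have "q h < L + e" if "0 < h" "h < h0" for h
      using q_mono[OF that] h0 by simp
    then show "\<forall>\<^sub>F h in at_right 0. dist (q h) L < e"
      unfolding eventually_at_right_field using h0 L_le by (force simp: dist_real_def)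
  qed
  then have "right_deriv f t = L"
    unfolding q_def by (rule right_deriv_eqI)
  then show "((\<lambda>h. (f (t + h) - f t) / h) \<longlongrightarrow> right_deriv f t) (at_right 0)"
    and "\<And>h. 0 < h \<Longrightarrow> right_deriv f t \<le> (f (t + h) - f t) / h"
    using lim L_le by (simp_all add: q_def[abs_def])
  show "(f t - f s) / (t - s) \<le> right_deriv f t" if "0 \<le> s" "s < t" for s
    unfolding \<open>right_deriv f t = L\<close> L_def
    using that secant_le_q by (intro cInf_greatest) auto
qed

lemma convex_on_has_right_derivative:
  fixes f :: "real \<Rightarrow> real"
  assumes "convex_on {0..} f" and t: "0 < t"
  shows "(f has_real_derivative right_deriv f t) (at t within {t<..})"
proof -
  have "((\<lambda>h. (f (h + t) - f t) / ((h + t) - t)) \<longlongrightarrow> right_deriv f t) (at_right 0)"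
    using convex_on_right_deriv(1)[OF assms] by (simp add: add.commute)
  then have "((\<lambda>y. (f y - f t) / (y - t)) \<longlongrightarrow> right_deriv f t) (at_right t)"
    by (subst at_right_to_0) (simp add: filterlim_filtermap)
  then show ?thesis by (simp add: has_field_derivative_iff)
qed

lemma DERIV_imp_right_quotient_tendsto:
  assumes "(f has_real_derivative D) (at t)"
  shows "((\<lambda>h. (f (t + h) - f t) / h) \<longlongrightarrow> D) (at_right 0)"
  using assms unfolding DERIV_def by (rule tendsto_within_subset) auto

lemma growth_index_add_DERIV:
  assumes f: "convex_on {0..} f" and t: "0 < t" and g: "(g has_real_derivative D) (at t)"
  shows "growth_index (\<lambda>s. f s + g s) t = (t * right_deriv f t + t * D) / (f t + g t)"
proof -
  have "((\<lambda>h. (f (t + h) - f t) / h + (g (t + h) - g t) / h) \<longlongrightarrow> right_deriv f t + D) (at_right 0)"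
    by (intro tendsto_add convex_on_right_deriv(1)[OF f t] DERIV_imp_right_quotient_tendsto[OF g])
  then have "right_deriv (\<lambda>s. f s + g s) t = right_deriv f t + D"
    by (intro right_deriv_eqI) (simp add: add_divide_distrib[symmetric] algebra_simps)
  then show ?thesis by (simp add: growth_index_def distrib_left)
qed

lemma growth_index_ge_1:
  assumes Y: "young_function \<Phi>" and t: "0 < t"
  shows "1 \<le> growth_index \<Phi> t"
proof -
  have "(\<Phi> t - \<Phi> 0) / (t - 0) \<le> right_deriv \<Phi> t"
    using convex_on_right_deriv(3)[OF young_function_convex[OF Y] t, of 0] t by simp
  then show ?thesis
    using t young_function_zero[OF Y] young_function_pos[OF Y t]
    by (simp add: growth_index_def pos_divide_le_eq pos_le_divide_eq mult.commute)
qed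

lemma growth_index_le_on_Icc:
  assumes Y: "young_function \<Phi>" and t: "0 < a" "a \<le> t" "t \<le> b"
  shows "growth_index \<Phi> t \<le> b * right_deriv \<Phi> b / \<Phi> a"
proof -
  have cv: "convex_on {0..} \<Phi>" using Y by (rule young_function_convex)
  have t0: "0 < t" using t by simp
  have tD_nonneg: "0 \<le> t * right_deriv \<Phi> t"
    using growth_index_ge_1[OF Y t0] young_function_pos[OF Y t0]
    by (simp add: growth_index_def le_divide_eq)
  then have D_nonneg: "0 \<le> right_deriv \<Phi> t"
    using t0 by (simp add: zero_le_mult_iff)
  have D_mono: "right_deriv \<Phi> t \<le> right_deriv \<Phi> b"
  proof (cases "t = b")
    case False
    with t have "t < b" by simp
    have "right_deriv \<Phi> t \<le> (\<Phi> (t + (b - t)) - \<Phi> t) / (b - t)"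
      using convex_on_right_deriv(2)[OF cv t0, of "b - t"] \<open>t < b\<close> by simp
    also have "\<dots> \<le> right_deriv \<Phi> b"
      using convex_on_right_deriv(3)[OF cv _ _ \<open>t < b\<close>] t0 \<open>t < b\<close> by simp
    finally show ?thesis .
  qed simp
  have "t * right_deriv \<Phi> t \<le> b * right_deriv \<Phi> b"
    using D_nonneg D_mono t by (intro mult_mono) auto
  then show ?thesis
    unfolding growth_index_def
    using young_function_mono[OF Y, of a t] young_function_pos[OF Y \<open>0 < a\<close>] tD_nonneg t
    by (intro frac_le) auto
qed

lemma right_DERIV_nonneg_imp_nondecreasing:
  fixes f f' :: "real \<Rightarrow> real"
  assumes xy: "x \<le> y" and cont: "continuous_on {x..y} f"
    and der: "\<And>t. x \<le> t \<Longrightarrow> t < y \<Longrightarrow> (f has_real_derivative f' t) (at t within {t<..})"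
    and nonneg: "\<And>t. x \<le> t \<Longrightarrow> t < y \<Longrightarrow> 0 \<le> f' t"
  shows "f x \<le> f y"
proof (rule ccontr)
  assume "\<not> f x \<le> f y"
  then have fy: "f y < f x" by simp
  with xy have "x < y" by (cases "x = y") auto
  define e where "e = (f x - f y) / (2 * (y - x))"
  have e: "0 < e" using fy \<open>x < y\<close> by (simp add: e_def)
  \<comment> \<open>Sup S is the last point up to which f stays above the line of slope -e through (x, f x)\<close>
  define S where "S = {s \<in> {x..y}. f x - e * (s - x) \<le> f s}"
  have "closed S" unfolding S_def
    by (intro continuous_on_closed_Collect_le cont continuous_intros)
  moreover have "x \<in> S" "bdd_above S" using xy by (auto simp: S_def)
  ultimately have cS: "Sup S \<in> S" using closed_contains_Sup by blast
  have c: "x \<le> Sup S" "Sup S \<le> y" "f x - e * (Sup S - x) \<le> f (Sup S)" using cS by (auto simp: S_def)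
  show False
  proof (cases "Sup S < y")
    case True
    have "((\<lambda>z. (f z - f (Sup S)) / (z - Sup S)) \<longlongrightarrow> f' (Sup S)) (at_right (Sup S))"
      using der[OF c(1) True] by (simp add: has_field_derivative_iff)
    moreover have "- e < f' (Sup S)" using nonneg[OF c(1) True] e by simp
    ultimately have "\<forall>\<^sub>F z in at_right (Sup S). - e < (f z - f (Sup S)) / (z - Sup S)"
      by (rule order_tendstoD)
    moreover have "\<forall>\<^sub>F z in at_right (Sup S). z < y"
      using True eventually_at_right_field by blast
    moreover note eventually_at_right_less[of "Sup S"]
    ultimately have "\<forall>\<^sub>F z in at_right (Sup S).
        Sup S < z \<and> z < y \<and> - e < (f z - f (Sup S)) / (z - Sup S)"
      by eventually_elim blast
    then obtain z where z: "Sup S < z" "z < y" "- e < (f z - f (Sup S)) / (z - Sup S)"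
      by (auto dest: eventually_happens simp: trivial_limit_at_right_real)
    then have "f x - e * (z - x) \<le> f z"
      using c(3) by (simp add: less_divide_eq algebra_simps)
    then have "z \<in> S" using z c by (simp add: S_def)
    then show False using z \<open>bdd_above S\<close> cSup_upper by fastforce
  next
    case False
    then have "Sup S = y" using c by simp
    then have "f x - e * (y - x) \<le> f y" using c by simp
    moreover have "e * (y - x) = (f x - f y) / 2" using \<open>x < y\<close> by (simp add: e_def field_simps)
    ultimately show False using fy by (simp add: field_simps)
  qed
qed

lemma young_power_quotient_has_right_derivative:
  assumes Y: "young_function \<Phi>" and t: "0 < t"
  shows "((\<lambda>s. \<Phi> s * s powr m) has_real_derivative
           t powr (m - 1) * (t * right_deriv \<Phi> t + m * \<Phi> t)) (at t within {t<..})"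
proof -
  have "((\<lambda>s. \<Phi> s * s powr m) has_real_derivative
      right_deriv \<Phi> t * t powr m + m * t powr (m - 1) * \<Phi> t) (at t within {t<..})"
    by (rule DERIV_mult[OF convex_on_has_right_derivative[OF young_function_convex[OF Y] t]
          has_field_derivative_at_within[OF has_real_derivative_powr[OF t]]])
  moreover have "t powr m = t powr (m - 1) * t"
    using t by (simp add: powr_diff)
  ultimately show ?thesis by (simp add: algebra_simps)
qed

lemma young_power_growth_upper:
  assumes Y: "young_function \<Phi>" and xy: "0 < x" "x \<le> y"
    and index: "\<And>t. x \<le> t \<Longrightarrow> t \<le> y \<Longrightarrow> growth_index \<Phi> t \<le> m"
  shows "\<Phi> y * x powr m \<le> \<Phi> x * y powr m"
proof -
  have "- (\<Phi> x * x powr (-m)) \<le> - (\<Phi> y * y powr (-m))"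
  proof (rule right_DERIV_nonneg_imp_nondecreasing[OF xy(2)])
    have "continuous_on {x..y} \<Phi>"
      using young_function_continuous_on[OF Y] by (rule continuous_on_subset) (use xy in auto)
    then show "continuous_on {x..y} (\<lambda>s. - (\<Phi> s * s powr (-m)))"
      using xy by (intro continuous_intros) auto
    fix t assume t: "x \<le> t" "t < y"
    then have t0: "0 < t" using xy by simp
    show "((\<lambda>s. - (\<Phi> s * s powr (-m))) has_real_derivative
        - (t powr (-m - 1) * (t * right_deriv \<Phi> t + -m * \<Phi> t))) (at t within {t<..})"
      using young_power_quotient_has_right_derivative[OF Y t0, of "-m"] by (intro DERIV_minus) simp
    have "t * right_deriv \<Phi> t \<le> m * \<Phi> t"
      using index[of t] t young_function_pos[OF Y t0] by (simp add: growth_index_def pos_divide_le_eq)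
    then show "0 \<le> - (t powr (-m - 1) * (t * right_deriv \<Phi> t + -m * \<Phi> t))"
      by (simp add: mult_nonneg_nonpos)
  qed
  then have "\<Phi> y * y powr (-m) * (x powr m * y powr m) \<le> \<Phi> x * x powr (-m) * (x powr m * y powr m)"
    by (intro mult_right_mono) auto
  then show ?thesis using xy by (simp add: powr_minus field_simps)
qed

lemma young_power_growth_lower:
  assumes Y: "young_function \<Phi>" and xy: "0 < x" "x \<le> y"
    and index: "\<And>t. x \<le> t \<Longrightarrow> t \<le> y \<Longrightarrow> m \<le> growth_index \<Phi> t"
  shows "\<Phi> x * y powr m \<le> \<Phi> y * x powr m"
proof -
  have "\<Phi> x * x powr (-m) \<le> \<Phi> y * y powr (-m)"
  proof (rule right_DERIV_nonneg_imp_nondecreasing[OF xy(2)])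
    have "continuous_on {x..y} \<Phi>"
      using young_function_continuous_on[OF Y] by (rule continuous_on_subset) (use xy in auto)
    then show "continuous_on {x..y} (\<lambda>s. \<Phi> s * s powr (-m))"
      using xy by (intro continuous_intros) auto
    fix t assume t: "x \<le> t" "t < y"
    then have t0: "0 < t" using xy by simp
    show "((\<lambda>s. \<Phi> s * s powr (-m)) has_real_derivative
        t powr (-m - 1) * (t * right_deriv \<Phi> t + -m * \<Phi> t)) (at t within {t<..})"
      by (rule young_power_quotient_has_right_derivative[OF Y t0])
    have "m * \<Phi> t \<le> t * right_deriv \<Phi> t"
      using index[of t] t young_function_pos[OF Y t0] by (simp add: growth_index_def pos_le_divide_eq)
    then show "0 \<le> t powr (-m - 1) * (t * right_deriv \<Phi> t + -m * \<Phi> t)"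
      by simp
  qed
  then have "\<Phi> x * x powr (-m) * (x powr m * y powr m) \<le> \<Phi> y * y powr (-m) * (x powr m * y powr m)"
    by (intro mult_right_mono) auto
  then show ?thesis using xy by (simp add: powr_minus field_simps)
qed

lemma young_power_minorant_at_right_0:
  assumes Y: "young_function \<Phi>" and "\<forall>\<^sub>F t in at_right 0. growth_index \<Phi> t \<le> m"
  shows "\<exists>c>0. \<forall>\<^sub>F t in at_right 0. c * t powr m \<le> \<Phi> t"
proof -
  obtain a where a: "0 < a" "\<And>t. 0 < t \<Longrightarrow> t < a \<Longrightarrow> growth_index \<Phi> t \<le> m"
    using assms(2) unfolding eventually_at_right_field by auto
  define x where "x = a / 2"
  have x: "0 < x" "x < a" using a by (auto simp: x_def)
  have "\<Phi> x / x powr m * t powr m \<le> \<Phi> t" if "0 < t" "t < x" for t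
    using young_power_growth_upper[OF Y that(1), of x m] a(2) that x
    by (simp add: divide_simps mult.commute)
  then have "\<forall>\<^sub>F t in at_right 0. \<Phi> x / x powr m * t powr m \<le> \<Phi> t"
    unfolding eventually_at_right_field using x by blast
  moreover have "0 < \<Phi> x / x powr m" using young_function_pos[OF Y x(1)] x by simp
  ultimately show ?thesis by blast
qed

lemma young_power_minorant_at_top:
  assumes Y: "young_function \<Phi>" and "\<forall>\<^sub>F t in at_top. m \<le> growth_index \<Phi> t"
  shows "\<exists>c>0. \<forall>\<^sub>F t in at_top. c * t powr m \<le> \<Phi> t"
proof -
  obtain b0 where b0: "\<And>t. b0 \<le> t \<Longrightarrow> m \<le> growth_index \<Phi> t"
    using assms(2) unfolding eventually_at_top_linorder by auto
  define b where "b = max 1 b0"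
  have "\<Phi> b / b powr m * t powr m \<le> \<Phi> t" if "b \<le> t" for t
    using young_power_growth_lower[OF Y _ that, of m] b0 that
    by (simp add: b_def divide_simps mult.commute)
  then have "\<forall>\<^sub>F t in at_top. \<Phi> b / b powr m * t powr m \<le> \<Phi> t"
    unfolding eventually_at_top_linorder by blast
  moreover have "0 < \<Phi> b / b powr m" using young_function_pos[OF Y, of b] by (simp add: b_def)
  ultimately show ?thesis by blast
qed

definition power_interp :: "real \<Rightarrow> real \<Rightarrow> real \<Rightarrow> real" where
  "power_interp a b t = t powr a * (1 + t) powr (b - a)"

definition power_interp_deriv :: "real \<Rightarrow> real \<Rightarrow> real \<Rightarrow> real" where
  "power_interp_deriv a b t = t powr (a - 1) * (1 + t) powr (b - a - 1) * (a + b * t)"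

lemma power_interp_zero [simp]: "power_interp a b 0 = 0"
  by (simp add: power_interp_def)

lemma power_interp_pos: "0 < t \<Longrightarrow> 0 < power_interp a b t"
  by (simp add: power_interp_def)

lemma power_interp_nonneg: "0 \<le> t \<Longrightarrow> 0 \<le> power_interp a b t"
  by (simp add: power_interp_def)

lemma power_interp_eq:
  assumes t: "0 < t"
  shows "power_interp a b t = t powr (a - 1) * (1 + t) powr (b - a - 1) * (t * (1 + t))"
proof -
  have "t powr a = t powr (a - 1) * t" "(1 + t) powr (b - a) = (1 + t) powr (b - a - 1) * (1 + t)"
    using t by (simp_all add: powr_diff)
  then show ?thesis unfolding power_interp_def by (simp add: ac_simps)
qed

lemma power_interp_has_derivative:
  assumes t: "0 < t"
  shows "(power_interp a b has_real_derivative power_interp_deriv a b t) (at t)"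
proof -
  have "(power_interp a b has_real_derivative
      a * t powr (a - 1) * (1 + t) powr (b - a) + (b - a) * (1 + t) powr (b - a - 1) * t powr a) (at t)"
    unfolding power_interp_def[abs_def] using t
    by (auto intro!: derivative_eq_intros)
  moreover have "a * t powr (a - 1) * (1 + t) powr (b - a) + (b - a) * (1 + t) powr (b - a - 1) * t powr a
      = power_interp_deriv a b t"
  proof -
    have "t powr a = t powr (a - 1) * t" "(1 + t) powr (b - a) = (1 + t) powr (b - a - 1) * (1 + t)"
      using t by (simp_all add: powr_diff)
    then show ?thesis unfolding power_interp_deriv_def by (simp add: algebra_simps)
  qed
  ultimately show ?thesis by simp
qed

lemma power_interp_continuous_on: "continuous_on {0<..} (power_interp a b)"
  by (rule DERIV_continuous_on) (auto intro: has_field_derivative_at_within power_interp_has_derivative)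

lemma power_interp_deriv_eq:
  assumes t: "0 < t"
  shows "t * power_interp_deriv a b t = power_interp a b t * ((a + b * t) / (1 + t))"
  using t unfolding power_interp_eq[OF t] power_interp_deriv_def by (simp add: field_simps)

lemma power_interp_deriv_mono:
  assumes ab: "1 \<le> a" "1 \<le> b" and xy: "0 < x" "x \<le> y"
  shows "power_interp_deriv a b x \<le> power_interp_deriv a b y"
proof -
  have pos: "0 < a + b * t" if "0 < t" for t
    using ab that by (intro add_pos_nonneg) auto
  define h where "h t = (a - 1) * ln t + (b - a - 1) * ln (1 + t) + ln (a + b * t)" for t
  have ln_deriv: "ln (power_interp_deriv a b t) = h t" if "0 < t" for t
    using that pos[OF that] unfolding power_interp_deriv_def h_def by (simp add: ln_mult ln_powr)
  have "h x \<le> h y"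
  proof (rule DERIV_nonneg_imp_nondecreasing[OF xy(2)])
    fix t assume t: "x \<le> t" "t \<le> y"
    then have t0: "0 < t" using xy by simp
    have "(h has_real_derivative (a - 1) / t + (b - a - 1) / (1 + t) + b / (a + b * t)) (at t)"
      unfolding h_def[abs_def] using t0 pos[OF t0]
      by (auto intro!: derivative_eq_intros simp: divide_inverse)
    moreover have "0 \<le> (a - 1) / t + (b - a - 1) / (1 + t) + b / (a + b * t)"
    proof -
      \<comment> \<open>over the common denominator the numerator is a polynomial in t with nonnegative coefficients\<close>
      define P where "P = a * (a - 1) + 2 * a * (b - 1) * t + b * (b - 1) * t^2"
      have "((a - 1) / t + (b - a - 1) / (1 + t) + b / (a + b * t)) * (t * (1 + t) * (a + b * t))
          = (a - 1) * ((1 + t) * (a + b * t)) + (b - a - 1) * (t * (a + b * t)) + b * (t * (1 + t))"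
        using t0 pos[OF t0] by (simp add: distrib_right)
      also have "\<dots> = P"
        unfolding P_def by (simp add: algebra_simps power2_eq_square)
      finally have "((a - 1) / t + (b - a - 1) / (1 + t) + b / (a + b * t)) * (t * (1 + t) * (a + b * t)) = P" .
      moreover have "0 \<le> P"
        unfolding P_def using ab t0 by (intro add_nonneg_nonneg mult_nonneg_nonneg) auto
      moreover have "0 < t * (1 + t) * (a + b * t)" using t0 pos[OF t0] by simp
      ultimately show ?thesis by (metis zero_le_mult_iff not_le)
    qed
    ultimately show "\<exists>D. (h has_real_derivative D) (at t) \<and> 0 \<le> D" by blast
  qed
  then have "ln (power_interp_deriv a b x) \<le> ln (power_interp_deriv a b y)"
    using ln_deriv xy by simp
  moreover have "0 < power_interp_deriv a b t" if "0 < t" for t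
    using that pos[OF that] by (simp add: power_interp_deriv_def)
  ultimately show ?thesis using xy by simp
qed

lemma power_interp_over_id_mono:
  assumes ab: "1 \<le> a" "1 \<le> b" and xy: "0 < x" "x \<le> y"
  shows "power_interp a b x / x \<le> power_interp a b y / y"
proof -
  have eq: "power_interp a b t / t = (t / (1 + t)) powr (a - 1) * (1 + t) powr (b - 1)" if "0 < t" for t
  proof -
    have "(t / (1 + t)) powr (a - 1) * (1 + t) powr (b - 1)
        = t powr (a - 1) * ((1 + t) powr (b - 1) / (1 + t) powr (a - 1))"
      using that by (simp add: powr_divide)
    also have "(1 + t) powr (b - 1) / (1 + t) powr (a - 1) = (1 + t) powr (b - a)"
      by (simp add: powr_diff[symmetric])
    also have "t powr (a - 1) * (1 + t) powr (b - a) = power_interp a b t / t"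
      unfolding power_interp_def using that by (simp add: powr_diff)
    finally show ?thesis by simp
  qed
  have "x / (1 + x) \<le> y / (1 + y)" using xy by (simp add: field_simps)
  then have "(x / (1 + x)) powr (a - 1) \<le> (y / (1 + y)) powr (a - 1)"
    using ab xy by (intro powr_mono2) auto
  moreover have "(1 + x) powr (b - 1) \<le> (1 + y) powr (b - 1)"
    using ab xy by (intro powr_mono2) auto
  ultimately show ?thesis
    unfolding eq[OF xy(1)] eq[OF order.strict_trans2[OF xy]] using xy by (auto intro!: mult_mono)
qed

lemma convex_on_extend_0:
  fixes f :: "real \<Rightarrow> real"
  assumes cv: "convex_on {0<..} f" and f0: "f 0 = 0"
    and mono: "\<And>x y. 0 < x \<Longrightarrow> x \<le> y \<Longrightarrow> f x / x \<le> f y / y"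
  shows "convex_on {0..} f"
proof (rule convex_onI)
  fix t x y :: real assume t: "0 < t" "t < 1" and xy: "x \<in> {0..}" "y \<in> {0..}"
  have scale: "f (c * z) \<le> c * f z" if "0 < c" "c < 1" "0 < z" for c z
  proof -
    have "f (c * z) / (c * z) \<le> f z / z" using mono[of "c * z" z] that by (simp add: mult_le_cancel_right1)
    then show ?thesis using that by (simp add: field_simps)
  qed
  consider "x = 0" "y = 0" | "x = 0" "0 < y" | "0 < x" "y = 0" | "0 < x" "0 < y"
    using xy by force
  then show "f ((1 - t) *\<^sub>R x + t *\<^sub>R y) \<le> (1 - t) * f x + t * f y"
  proof cases
    case 1 then show ?thesis using f0 by simp
  next
    case 2 then show ?thesis using f0 scale[of t y] t by simp
  next
    case 3 then show ?thesis using f0 scale[of "1 - t" x] t by simp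
  next
    case 4 then show ?thesis using convex_onD[OF cv, of t x y] t by simp
  qed
qed simp

lemma convex_on_power_interp:
  assumes "1 \<le> a" "1 \<le> b"
  shows "convex_on {0..} (power_interp a b)"
proof (rule convex_on_extend_0)
  show "convex_on {0<..} (power_interp a b)"
    by (rule convex_on_realI[where f' = "power_interp_deriv a b"])
      (auto intro: power_interp_has_derivative power_interp_deriv_mono[OF assms])
qed (auto intro: power_interp_over_id_mono[OF assms])

lemma power_interp_le_at_0:
  assumes t: "0 < t" "t \<le> 1"
  shows "power_interp a b t \<le> 2 powr \<bar>b - a\<bar> * t powr a"
proof -
  have "(1 + t) powr (b - a) \<le> 2 powr \<bar>b - a\<bar>"
  proof (cases "0 \<le> b - a")
    case True
    then show ?thesis using t by (simp add: powr_mono2)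
  next
    case False
    then have "(1 + t) powr (b - a) \<le> 1" using powr_mono[of "b - a" 0 "1 + t"] t by simp
    also have "1 \<le> 2 powr \<bar>b - a\<bar>" by (simp add: ge_one_powr_ge_zero)
    finally show ?thesis .
  qed
  then show ?thesis unfolding power_interp_def by (simp add: mult.commute mult_left_mono)
qed

lemma power_interp_le_at_top:
  assumes t: "1 \<le> t"
  shows "power_interp a b t \<le> 2 powr \<bar>b - a\<bar> * t powr b"
proof -
  have eq: "power_interp a b t = t powr b * ((1 + t) / t) powr (b - a)"
    unfolding power_interp_def using t by (simp add: powr_divide powr_diff field_simps)
  have "((1 + t) / t) powr (b - a) \<le> 2 powr \<bar>b - a\<bar>"
  proof (cases "0 \<le> b - a")
    case True
    have "(1 + t) / t \<le> 2" using t by (simp add: field_simps)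
    then show ?thesis using True t by (simp add: powr_mono2)
  next
    case False
    have "1 \<le> (1 + t) / t" using t by (simp add: field_simps)
    then have "((1 + t) / t) powr (b - a) \<le> 1" using powr_mono[of "b - a" 0 "(1 + t) / t"] False t by simp
    also have "1 \<le> 2 powr \<bar>b - a\<bar>" by (simp add: ge_one_powr_ge_zero)
    finally show ?thesis .
  qed
  then show ?thesis unfolding eq using t by (simp add: mult_left_mono)
qed

lemma young_function_add:
  assumes Y: "young_function \<Phi>" and g: "convex_on {0..} g" "g 0 = 0" "\<And>t. 0 \<le> t \<Longrightarrow> 0 \<le> g t"
  shows "young_function (\<lambda>t. \<Phi> t + g t)"
  unfolding young_function_def
proof (intro conjI allI impI)
  show "convex_on {0..} (\<lambda>t. \<Phi> t + g t)"
    using young_function_convex[OF Y] g(1) by (rule convex_on_add)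
  show "\<Phi> 0 + g 0 = 0" using young_function_zero[OF Y] g(2) by simp
  show "0 < \<Phi> t + g t" if "0 < t" for t
    using young_function_pos[OF Y that] g(3)[of t] that by simp
  have "\<forall>\<^sub>F t in at_top. \<Phi> t \<le> \<Phi> t + g t"
    using eventually_ge_at_top[of 0] by eventually_elim (use g(3) in simp)
  moreover have "filterlim \<Phi> at_top at_top" using Y by (simp add: young_function_def)
  ultimately show "filterlim (\<lambda>t. \<Phi> t + g t) at_top at_top"
    by (rule filterlim_at_top_mono[rotated])
qed

lemma young_equiv_add:
  assumes Y: "young_function \<Phi>" and E: "0 \<le> E"
    and g: "\<And>t. 0 \<le> t \<Longrightarrow> 0 \<le> g t \<and> g t \<le> E * \<Phi> t"
  shows "young_equiv \<Phi> (\<lambda>t. \<Phi> t + g t)"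
  unfolding young_equiv_def
proof (intro exI[of _ "1 + E"] conjI allI impI)
  fix t :: real assume t: "0 \<le> t"
  have "\<Phi> t + g t \<le> (1 + E) * \<Phi> t" using g[OF t] by (simp add: algebra_simps)
  then show "(\<Phi> t + g t) / (1 + E) \<le> \<Phi> t" using E by (simp add: divide_le_eq mult.commute)
  have "\<Phi> t \<le> \<Phi> t + g t" using g[OF t] by simp
  also have "\<dots> \<le> (1 + E) * (\<Phi> t + g t)"
    using E g[OF t] young_function_nonneg[OF Y t] by (simp add: algebra_simps)
  finally show "\<Phi> t \<le> (1 + E) * (\<Phi> t + g t)" .
qed (use E in simp)

lemma weighted_mean_between:
  fixes x y w :: real
  assumes "0 \<le> w"
  shows "min x y \<le> (x + w * y) / (1 + w)" and "(x + w * y) / (1 + w) \<le> max x y"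
proof -
  have "w * min x y \<le> w * y" "w * y \<le> w * max x y"
    using assms by (simp_all add: mult_left_mono)
  then have "min x y * (1 + w) \<le> x + w * y" "x + w * y \<le> max x y * (1 + w)"
    by (simp_all add: algebra_simps)
  then show "min x y \<le> (x + w * y) / (1 + w)" and "(x + w * y) / (1 + w) \<le> max x y"
    using assms by (simp_all add: le_divide_eq divide_le_eq)
qed

lemma quotient_le_powr_of_bounds:
  fixes f g t :: real
  assumes "0 < c" "0 < t" "c * t powr m \<le> f" "g \<le> C * t powr n" "0 \<le> C"
  shows "g / f \<le> C / c * t powr (n - m)"
proof -
  have "0 < c * t powr m" using assms by simp
  then have f: "0 < f" using assms(3) by linarith
  have "g / f \<le> C * t powr n / f" using assms f by (simp add: divide_right_mono)
  also have "\<dots> \<le> C * t powr n / (c * t powr m)" using assms f by (intro divide_left_mono) auto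
  also have "\<dots> = C / c * t powr (n - m)" by (simp add: powr_diff)
  finally show ?thesis .
qed

lemma continuous_on_Ioi_bounded_above:
  fixes f :: "real \<Rightarrow> real"
  assumes f: "continuous_on {0<..} f"
    and at_0: "\<forall>\<^sub>F t in at_right 0. f t \<le> B0" and at_top: "\<forall>\<^sub>F t in at_top. f t \<le> B1"
  shows "\<exists>B. \<forall>t>0. f t \<le> B"
proof -
  obtain a where a: "0 < a" "\<And>t. 0 < t \<Longrightarrow> t < a \<Longrightarrow> f t \<le> B0"
    using at_0 unfolding eventually_at_right_field by auto
  obtain b where b: "a \<le> b" "\<And>t. b \<le> t \<Longrightarrow> f t \<le> B1"
    using at_top unfolding eventually_at_top_linorder by (metis max.cobounded1 max.boundedE)
  have "continuous_on {a..b} f" using f by (rule continuous_on_subset) (use a in auto)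
  then obtain x where "\<forall>y\<in>{a..b}. f y \<le> f x"
    using continuous_attains_sup[of "{a..b}" f] b by auto
  then have "f t \<le> max B0 (max B1 (f x))" if "0 < t" for t
  proof -
    consider "t < a" | "t \<in> {a..b}" | "b \<le> t" by fastforce
    then show ?thesis using a(2)[OF that] b(2)[of t] \<open>\<forall>y\<in>{a..b}. f y \<le> f x\<close> by cases force+
  qed
  then show ?thesis by blast
qed

lemma tendsto_le_SUP_ereal:
  fixes f :: "'a \<Rightarrow> real"
  assumes "(f \<longlongrightarrow> l) F" "F \<noteq> bot" "\<forall>\<^sub>F x in F. x \<in> A"
  shows "ereal l \<le> (SUP x\<in>A. ereal (f x))"
proof (rule tendsto_le[OF assms(2) tendsto_const])
  show "((\<lambda>x. ereal (f x)) \<longlongrightarrow> ereal l) F" using assms(1) by (rule tendsto_ereal)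
  show "\<forall>\<^sub>F x in F. ereal (f x) \<le> (SUP x\<in>A. ereal (f x))"
    using assms(3) by eventually_elim (rule SUP_upper)
qed

lemma INF_ereal_le_tendsto:
  fixes f :: "'a \<Rightarrow> real"
  assumes "(f \<longlongrightarrow> l) F" "F \<noteq> bot" "\<forall>\<^sub>F x in F. x \<in> A"
  shows "(INF x\<in>A. ereal (f x)) \<le> ereal l"
proof (rule tendsto_le[OF assms(2) _ tendsto_const])
  show "((\<lambda>x. ereal (f x)) \<longlongrightarrow> ereal l) F" using assms(1) by (rule tendsto_ereal)
  show "\<forall>\<^sub>F x in F. (INF x\<in>A. ereal (f x)) \<le> ereal (f x)"
    using assms(3) by eventually_elim (rule INF_lower)
qed

lemma lebesgue_exponents_bounds:
  assumes at_0: "(growth_index \<Psi> \<longlongrightarrow> p0) (at_right 0)"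
    and at_top: "(growth_index \<Psi> \<longlongrightarrow> pinf) at_top"
    and bounds: "\<And>t. 0 < t \<Longrightarrow> L \<le> growth_index \<Psi> t \<and> growth_index \<Psi> t \<le> U"
  shows "ereal (max p0 pinf) \<le> upper_index \<Psi>" "upper_index \<Psi> \<le> ereal U"
    and "lower_index \<Psi> \<le> ereal (min p0 pinf)" "ereal L \<le> lower_index \<Psi>"
proof -
  have upper: "upper_index \<Psi> = (SUP t\<in>{0<..}. ereal (growth_index \<Psi> t))"
    and lower: "lower_index \<Psi> = (INF t\<in>{0<..}. ereal (growth_index \<Psi> t))"
    by (simp_all add: upper_index_def lower_index_def growth_index_def)
  have in_0: "\<forall>\<^sub>F t in at_right 0. t \<in> {0::real<..}"
    using eventually_at_right_less[of 0] by simp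
  have in_top: "\<forall>\<^sub>F t in at_top. t \<in> {0::real<..}"
    using eventually_gt_at_top[of 0] by simp
  show "ereal (max p0 pinf) \<le> upper_index \<Psi>"
    unfolding upper max_def
    using tendsto_le_SUP_ereal[OF at_0 _ in_0] tendsto_le_SUP_ereal[OF at_top _ in_top] by simp
  show "lower_index \<Psi> \<le> ereal (min p0 pinf)"
    unfolding lower min_def
    using INF_ereal_le_tendsto[OF at_0 _ in_0] INF_ereal_le_tendsto[OF at_top _ in_top] by simp
  show "upper_index \<Psi> \<le> ereal U" unfolding upper using bounds by (intro SUP_least) auto
  show "ereal L \<le> lower_index \<Psi>" unfolding lower using bounds by (intro INF_greatest) auto
qed

locale young_limit_indices =
  fixes \<Phi> :: "real \<Rightarrow> real" and p0 pinf :: real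
  assumes young: "young_function \<Phi>"
    and index_at_0: "(growth_index \<Phi> \<longlongrightarrow> p0) (at_right 0)"
    and index_at_top: "(growth_index \<Phi> \<longlongrightarrow> pinf) at_top"
begin

lemma limit_indices_ge_1: "1 \<le> p0" "1 \<le> pinf"
proof -
  have "\<forall>\<^sub>F t in at_right 0. 1 \<le> growth_index \<Phi> t"
    using eventually_at_right_less[of 0] by eventually_elim (rule growth_index_ge_1[OF young])
  then show "1 \<le> p0"
    using tendsto_lowerbound[OF index_at_0] by (simp add: trivial_limit_at_right_real)
  have "\<forall>\<^sub>F t in at_top. 1 \<le> growth_index \<Phi> t"
    using eventually_gt_at_top[of 0] by eventually_elim (rule growth_index_ge_1[OF young])
  then show "1 \<le> pinf"
    using tendsto_lowerbound[OF index_at_top] by simp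
qed

lemma index_close_to_limits_off_compact:
  assumes "0 < \<epsilon>"
  shows "\<exists>a b. 0 < a \<and> a \<le> b \<and> (\<forall>t>0. t < a \<or> b \<le> t \<longrightarrow>
           min p0 pinf - \<epsilon> \<le> growth_index \<Phi> t \<and> growth_index \<Phi> t \<le> max p0 pinf + \<epsilon>)"
proof -
  obtain a where a: "0 < a" "\<And>t. 0 < t \<Longrightarrow> t < a \<Longrightarrow> \<bar>growth_index \<Phi> t - p0\<bar> < \<epsilon>"
    using tendstoD[OF index_at_0 assms] unfolding eventually_at_right_field dist_real_def by auto
  obtain b where b: "\<And>t. b \<le> t \<Longrightarrow> \<bar>growth_index \<Phi> t - pinf\<bar> < \<epsilon>"
    using tendstoD[OF index_at_top assms] unfolding eventually_at_top_linorder dist_real_def by auto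
  have "min p0 pinf \<le> p0" "min p0 pinf \<le> pinf" "p0 \<le> max p0 pinf" "pinf \<le> max p0 pinf"
    by simp_all
  then have "\<forall>t>0. t < a \<or> max a b \<le> t \<longrightarrow>
      min p0 pinf - \<epsilon> \<le> growth_index \<Phi> t \<and> growth_index \<Phi> t \<le> max p0 pinf + \<epsilon>"
    using a(2) b by (force simp: abs_less_iff)
  then show ?thesis using a(1) by (intro exI[of _ a] exI[of _ "max a b"]) simp
qed

end

locale young_index_perturbation = young_limit_indices +
  fixes \<delta> :: real
  assumes delta_pos: "0 < \<delta>"
begin

definition \<alpha> :: real where "\<alpha> = p0 + \<delta>"

definition \<beta> :: real where "\<beta> = max 1 (pinf - \<delta>)"

abbreviation G :: "real \<Rightarrow> real" where "G \<equiv> power_interp \<alpha> \<beta>"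

definition \<sigma> :: "real \<Rightarrow> real" where "\<sigma> t = (\<alpha> + \<beta> * t) / (1 + t)"

definition weight :: "real \<Rightarrow> real" where "weight t = G t / \<Phi> t"

definition perturbed :: "real \<Rightarrow> real \<Rightarrow> real" where "perturbed K = (\<lambda>t. \<Phi> t + K * G t)"

lemma alpha_ge_1: "1 \<le> \<alpha>" and beta_ge_1: "1 \<le> \<beta>" and beta_le_pinf: "\<beta> \<le> pinf"
  using limit_indices_ge_1 delta_pos by (auto simp: \<alpha>_def \<beta>_def)

lemma sigma_bounds:
  assumes "0 < t"
  shows "min p0 pinf - \<delta> \<le> \<sigma> t" "\<sigma> t \<le> max p0 pinf + \<delta>" "0 \<le> \<sigma> t" "\<sigma> t \<le> max \<alpha> \<beta>"
proof -
  have "min \<alpha> \<beta> \<le> \<sigma> t" "\<sigma> t \<le> max \<alpha> \<beta>"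
    using weighted_mean_between[of t \<alpha> \<beta>] assms by (simp_all add: \<sigma>_def mult.commute)
  moreover have "min p0 pinf - \<delta> \<le> min \<alpha> \<beta>" "max \<alpha> \<beta> \<le> max p0 pinf + \<delta>"
    using beta_le_pinf delta_pos by (auto simp: \<alpha>_def \<beta>_def)
  ultimately show "min p0 pinf - \<delta> \<le> \<sigma> t" "\<sigma> t \<le> max p0 pinf + \<delta>" "0 \<le> \<sigma> t" "\<sigma> t \<le> max \<alpha> \<beta>"
    using alpha_ge_1 beta_ge_1 by auto
qed

lemma sigma_at_0: "(\<sigma> \<longlongrightarrow> \<alpha>) (at_right 0)"
proof -
  have "((\<lambda>t. (\<alpha> + \<beta> * t) / (1 + t)) \<longlongrightarrow> (\<alpha> + \<beta> * 0) / (1 + 0)) (at_right 0)"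
    by (intro tendsto_intros) auto
  then show ?thesis by (simp add: \<sigma>_def[abs_def])
qed

lemma sigma_at_top: "(\<sigma> \<longlongrightarrow> \<beta>) at_top"
proof -
  have "((\<lambda>t. \<beta> + (\<alpha> - \<beta>) * inverse (1 + t)) \<longlongrightarrow> \<beta> + (\<alpha> - \<beta>) * 0) at_top"
    by (intro tendsto_intros tendsto_inverse_0_at_top
          filterlim_tendsto_add_at_top[OF tendsto_const filterlim_ident])
  moreover have "\<forall>\<^sub>F t in at_top. \<beta> + (\<alpha> - \<beta>) * inverse (1 + t) = \<sigma> t"
    using eventually_gt_at_top[of 0] by eventually_elim (simp add: \<sigma>_def field_simps)
  ultimately show ?thesis by (simp add: tendsto_cong)
qed

lemma weight_pos: "0 < t \<Longrightarrow> 0 < weight t"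
  by (simp add: weight_def power_interp_pos young_function_pos[OF young])

lemma weight_continuous_on: "continuous_on {0<..} weight"
proof -
  have "\<forall>t\<in>{0<..}. \<Phi> t \<noteq> 0" using young_function_pos[OF young] by force
  then show ?thesis
    unfolding weight_def[abs_def]
    by (intro continuous_on_divide power_interp_continuous_on young_function_continuous_on[OF young])
qed

lemma weight_at_0: "(weight \<longlongrightarrow> 0) (at_right 0)"
proof -
  define \<gamma> where "\<gamma> = p0 + \<delta> / 2"
  have "p0 < \<gamma>" using delta_pos by (simp add: \<gamma>_def)
  with index_at_0 have "\<forall>\<^sub>F t in at_right 0. growth_index \<Phi> t \<le> \<gamma>"
    by (rule eventually_mono[OF order_tendstoD(2)]) simp
  then obtain c where c: "0 < c" "\<forall>\<^sub>F t in at_right 0. c * t powr \<gamma> \<le> \<Phi> t"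
    using young_power_minorant_at_right_0[OF young] by blast
  define C where "C = 2 powr \<bar>\<beta> - \<alpha>\<bar>"
  have bound: "\<forall>\<^sub>F t in at_right 0. norm (weight t) \<le> C / c * t powr (\<delta> / 2)"
    using c(2) eventually_at_right_real[OF zero_less_one]
  proof eventually_elim
    case (elim t)
    then have "weight t \<le> C / c * t powr (\<alpha> - \<gamma>)"
      unfolding weight_def using c(1) power_interp_le_at_0[of t \<alpha> \<beta>]
      by (intro quotient_le_powr_of_bounds) (auto simp: C_def)
    moreover have "\<alpha> - \<gamma> = \<delta> / 2" by (simp add: \<alpha>_def \<gamma>_def)
    ultimately show ?case using weight_pos[of t] elim by simp
  qed
  have "((\<lambda>t. t powr (\<delta> / 2)) \<longlongrightarrow> 0) (at_right 0)"
    using delta_pos eventually_mono[OF eventually_at_right_less[of 0] less_imp_le]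
    by (intro tendsto_zero_powrI[where b = "\<delta> / 2"] tendsto_ident_at tendsto_const) simp_all
  then show ?thesis by (rule Lim_null_comparison[OF bound tendsto_mult_right_zero])
qed

lemma weight_le_powr_at_top:
  assumes "\<forall>\<^sub>F t in at_top. m \<le> growth_index \<Phi> t"
  shows "\<exists>C. \<forall>\<^sub>F t in at_top. weight t \<le> C * t powr (\<beta> - m)"
proof -
  obtain c where c: "0 < c" "\<forall>\<^sub>F t in at_top. c * t powr m \<le> \<Phi> t"
    using young_power_minorant_at_top[OF young assms] by blast
  have "\<forall>\<^sub>F t in at_top. weight t \<le> 2 powr \<bar>\<beta> - \<alpha>\<bar> / c * t powr (\<beta> - m)"
    using c(2) eventually_ge_at_top[of 1]
  proof eventually_elim
    case (elim t)
    then show ?case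
      unfolding weight_def using c(1) power_interp_le_at_top[of t \<alpha> \<beta>]
      by (intro quotient_le_powr_of_bounds) auto
  qed
  then show ?thesis by blast
qed

lemma index_eventually_ge_beta: "\<forall>\<^sub>F t in at_top. \<beta> \<le> growth_index \<Phi> t"
proof (cases "\<beta> < pinf")
  case True
  show ?thesis using order_tendstoD(1)[OF index_at_top True] by (rule eventually_mono) simp
next
  case False
  \<comment> \<open>then \<beta> = pinf, which forces \<beta> = 1\<close>
  then have "\<beta> = 1" using delta_pos by (auto simp: \<beta>_def)
  have "\<forall>\<^sub>F t in at_top. 1 \<le> growth_index \<Phi> t"
    using eventually_gt_at_top[of 0] by eventually_elim (rule growth_index_ge_1[OF young])
  with \<open>\<beta> = 1\<close> show ?thesis by simp
qed

lemma weight_at_top: "\<beta> < pinf \<Longrightarrow> (weight \<longlongrightarrow> 0) at_top"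
proof -
  assume "\<beta> < pinf"
  define \<gamma> where "\<gamma> = (\<beta> + pinf) / 2"
  have "\<gamma> < pinf" using \<open>\<beta> < pinf\<close> by (simp add: \<gamma>_def)
  with index_at_top have "\<forall>\<^sub>F t in at_top. \<gamma> \<le> growth_index \<Phi> t"
    by (rule eventually_mono[OF order_tendstoD(1)]) simp
  then obtain C where C: "\<forall>\<^sub>F t in at_top. weight t \<le> C * t powr (\<beta> - \<gamma>)"
    using weight_le_powr_at_top by blast
  have bound: "\<forall>\<^sub>F t in at_top. norm (weight t) \<le> C * t powr (\<beta> - \<gamma>)"
    using C eventually_gt_at_top[of 0] by eventually_elim (simp add: weight_pos less_imp_le)
  have "((\<lambda>t. t powr (\<beta> - \<gamma>)) \<longlongrightarrow> 0) at_top"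
    using \<open>\<beta> < pinf\<close> by (intro tendsto_neg_powr filterlim_ident) (simp add: \<gamma>_def)
  then show ?thesis by (rule Lim_null_comparison[OF bound tendsto_mult_right_zero])
qed

lemma weight_bounded: "\<exists>E. \<forall>t>0. weight t \<le> E"
proof -
  obtain C where "\<forall>\<^sub>F t in at_top. weight t \<le> C * t powr (\<beta> - \<beta>)"
    using weight_le_powr_at_top[OF index_eventually_ge_beta] by blast
  then have "\<forall>\<^sub>F t in at_top. weight t \<le> C"
    using eventually_gt_at_top[of 0] by eventually_elim simp
  moreover have "\<forall>\<^sub>F t in at_right 0. weight t \<le> 1"
    using order_tendstoD(2)[OF weight_at_0 zero_less_one] by (rule eventually_mono) simp
  ultimately show ?thesis
    using continuous_on_Ioi_bounded_above[OF weight_continuous_on] by blast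
qed

lemma perturbed_young: "0 \<le> K \<Longrightarrow> young_function (perturbed K)"
  unfolding perturbed_def
  by (intro young_function_add young convex_on_cmul convex_on_power_interp alpha_ge_1 beta_ge_1)
    (auto simp: power_interp_nonneg)

lemma perturbed_equiv:
  assumes K: "0 \<le> K"
  shows "young_equiv \<Phi> (perturbed K)"
proof -
  obtain E where E: "\<And>t. 0 < t \<Longrightarrow> weight t \<le> E" using weight_bounded by blast
  have "0 \<le> E" using E[of 1] weight_pos[of 1] by simp
  have "G t \<le> E * \<Phi> t" if "0 \<le> t" for t
  proof (cases "t = 0")
    case False
    with that have "0 < t" by simp
    then show ?thesis
      using E young_function_pos[OF young] by (simp add: weight_def pos_divide_le_eq)
  qed (simp add: young_function_zero[OF young])
  then have "0 \<le> K * G t \<and> K * G t \<le> (K * E) * \<Phi> t" if "0 \<le> t" for t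
    using that K by (simp add: power_interp_nonneg mult.assoc mult_left_mono)
  then show ?thesis
    unfolding perturbed_def using K \<open>0 \<le> E\<close> by (intro young_equiv_add[OF young, of "K * E"]) simp_all
qed

lemma growth_index_perturbed:
  assumes t: "0 < t"
  shows "growth_index (perturbed K) t
    = (growth_index \<Phi> t + K * weight t * \<sigma> t) / (1 + K * weight t)"
proof -
  have "growth_index (perturbed K) t
      = (t * right_deriv \<Phi> t + t * (K * power_interp_deriv \<alpha> \<beta> t)) / (\<Phi> t + K * G t)"
    unfolding perturbed_def
    by (intro growth_index_add_DERIV young_function_convex[OF young] t
        DERIV_cmult power_interp_has_derivative)
  also have "\<dots> = (\<Phi> t * growth_index \<Phi> t + K * (G t * \<sigma> t)) / (\<Phi> t + K * G t)"
  proof -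
    have "t * (K * power_interp_deriv \<alpha> \<beta> t) = K * (G t * \<sigma> t)"
      using power_interp_deriv_eq[OF t, of \<alpha> \<beta>] by (simp add: \<sigma>_def mult.left_commute)
    moreover have "t * right_deriv \<Phi> t = \<Phi> t * growth_index \<Phi> t"
      using young_function_pos[OF young t] by (simp add: growth_index_def)
    ultimately show ?thesis by simp
  qed
  also have "\<dots> = (\<Phi> t * (growth_index \<Phi> t + K * weight t * \<sigma> t)) / (\<Phi> t * (1 + K * weight t))"
    using young_function_pos[OF young t] by (simp add: weight_def algebra_simps)
  also have "\<dots> = (growth_index \<Phi> t + K * weight t * \<sigma> t) / (1 + K * weight t)"
    using young_function_pos[OF young t] by simp
  finally show ?thesis .
qed

lemma perturbed_index_at_0: "(growth_index (perturbed K) \<longlongrightarrow> p0) (at_right 0)"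
proof -
  have lim: "((\<lambda>t. (growth_index \<Phi> t + K * weight t * \<sigma> t) / (1 + K * weight t))
      \<longlongrightarrow> (p0 + K * 0 * \<alpha>) / (1 + K * 0)) (at_right 0)"
    by (rule tendsto_divide[OF tendsto_add[OF index_at_0 tendsto_mult[OF tendsto_mult_left[OF weight_at_0]
        sigma_at_0]] tendsto_add[OF tendsto_const tendsto_mult_left[OF weight_at_0]]]) simp
  have "\<forall>\<^sub>F t in at_right 0. growth_index (perturbed K) t
      = (growth_index \<Phi> t + K * weight t * \<sigma> t) / (1 + K * weight t)"
    using eventually_at_right_less[of 0] by eventually_elim (rule growth_index_perturbed)
  with lim show ?thesis using tendsto_cong by fastforce
qed

lemma perturbed_index_at_top:
  assumes K: "0 \<le> K"
  shows "(growth_index (perturbed K) \<longlongrightarrow> pinf) at_top"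
proof -
  have eq: "\<forall>\<^sub>F t in at_top. growth_index (perturbed K) t
      = (growth_index \<Phi> t + K * weight t * \<sigma> t) / (1 + K * weight t)"
    using eventually_gt_at_top[of 0] by eventually_elim (rule growth_index_perturbed)
  show ?thesis
  proof (cases "\<beta> < pinf")
    case True
    have lim: "((\<lambda>t. (growth_index \<Phi> t + K * weight t * \<sigma> t) / (1 + K * weight t))
        \<longlongrightarrow> (pinf + K * 0 * \<beta>) / (1 + K * 0)) at_top"
      by (rule tendsto_divide[OF tendsto_add[OF index_at_top tendsto_mult[OF
          tendsto_mult_left[OF weight_at_top[OF True]] sigma_at_top]]
          tendsto_add[OF tendsto_const tendsto_mult_left[OF weight_at_top[OF True]]]]) simp
    with eq show ?thesis using tendsto_cong by fastforce
  next
    case False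
    \<comment> \<open>then \<sigma> tends to pinf as well, and the index of the perturbation is squeezed\<close>
    then have \<sigma>: "(\<sigma> \<longlongrightarrow> pinf) at_top" using sigma_at_top beta_le_pinf by simp
    have w: "0 \<le> K * weight t" if "0 < t" for t
      using K weight_pos[OF that] by simp
    have "\<forall>\<^sub>F t in at_top. min (growth_index \<Phi> t) (\<sigma> t) \<le> growth_index (perturbed K) t"
      using eq eventually_gt_at_top[of 0]
      by eventually_elim (use weighted_mean_between(1)[OF w] in simp)
    moreover have "\<forall>\<^sub>F t in at_top. growth_index (perturbed K) t \<le> max (growth_index \<Phi> t) (\<sigma> t)"
      using eq eventually_gt_at_top[of 0]
      by eventually_elim (use weighted_mean_between(2)[OF w] in simp)
    moreover have "((\<lambda>t. min (growth_index \<Phi> t) (\<sigma> t)) \<longlongrightarrow> pinf) at_top"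
      using tendsto_min[OF index_at_top \<sigma>] by simp
    moreover have "((\<lambda>t. max (growth_index \<Phi> t) (\<sigma> t)) \<longlongrightarrow> pinf) at_top"
      using tendsto_max[OF index_at_top \<sigma>] by simp
    ultimately show ?thesis by (rule tendsto_sandwich)
  qed
qed

lemma perturbed_index_close_to_sigma_on_Icc:
  assumes ab: "0 < a" "a \<le> b"
  shows "\<exists>K>0. \<forall>t\<in>{a..b}. \<bar>growth_index (perturbed K) t - \<sigma> t\<bar> \<le> \<delta>"
proof -
  define M where "M = b * right_deriv \<Phi> b / \<Phi> a"
  have index_mid: "1 \<le> growth_index \<Phi> t \<and> growth_index \<Phi> t \<le> M" if "a \<le> t" "t \<le> b" for t
    using growth_index_ge_1[OF young] growth_index_le_on_Icc[OF young ab(1) that] that ab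
    by (simp add: M_def)
  have "continuous_on {a..b} weight"
    using weight_continuous_on by (rule continuous_on_subset) (use ab in auto)
  then obtain x where x: "x \<in> {a..b}" "\<And>t. t \<in> {a..b} \<Longrightarrow> weight x \<le> weight t"
    using continuous_attains_inf[of "{a..b}" weight] ab by auto
  have wx: "0 < weight x" using x(1) ab by (intro weight_pos) simp
  define C where "C = M + max \<alpha> \<beta>"
  have C: "0 < C" using index_mid[of a] ab alpha_ge_1 max.cobounded1[of \<alpha> \<beta>] unfolding C_def by linarith
  define K where "K = C / (weight x * \<delta>)"
  have K: "0 < K" using C wx delta_pos by (simp add: K_def)
  have "\<bar>growth_index (perturbed K) t - \<sigma> t\<bar> \<le> \<delta>" if t: "t \<in> {a..b}" for t
  proof -
    have t0: "0 < t" using t ab by simp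
    have w: "0 \<le> K * weight t" using K weight_pos[OF t0] by simp
    have diff: "growth_index (perturbed K) t - \<sigma> t = (growth_index \<Phi> t - \<sigma> t) / (1 + K * weight t)"
      unfolding growth_index_perturbed[OF t0] using w by (simp add: field_simps)
    have "\<bar>growth_index \<Phi> t - \<sigma> t\<bar> \<le> C"
      using index_mid[of t] sigma_bounds[OF t0] t unfolding C_def abs_le_iff by auto
    moreover have "K * weight x \<le> 1 + K * weight t"
      using x(2)[OF t] K by (simp add: mult_left_mono add_increasing)
    moreover have "K * weight x = C / \<delta>" using wx delta_pos by (simp add: K_def)
    ultimately have "\<bar>growth_index \<Phi> t - \<sigma> t\<bar> / (1 + K * weight t) \<le> C / (C / \<delta>)"
      using C delta_pos by (intro frac_le) auto
    then show ?thesis using C w by (simp add: diff abs_divide)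
  qed
  with K show ?thesis by blast
qed

lemma perturbed_index_bounds:
  "\<exists>K\<ge>0. \<forall>t>0. min p0 pinf - 2 * \<delta> \<le> growth_index (perturbed K) t
                \<and> growth_index (perturbed K) t \<le> max p0 pinf + 2 * \<delta>"
proof -
  obtain a b where ab: "0 < a" "a \<le> b"
    and outer: "\<And>t. 0 < t \<Longrightarrow> t < a \<or> b \<le> t \<Longrightarrow>
                  min p0 pinf - \<delta> \<le> growth_index \<Phi> t \<and> growth_index \<Phi> t \<le> max p0 pinf + \<delta>"
    using index_close_to_limits_off_compact[OF delta_pos] by blast
  obtain K where K: "0 < K" and mid: "\<And>t. t \<in> {a..b} \<Longrightarrow> \<bar>growth_index (perturbed K) t - \<sigma> t\<bar> \<le> \<delta>"
    using perturbed_index_close_to_sigma_on_Icc[OF ab] by blast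
  have "min p0 pinf - 2 * \<delta> \<le> growth_index (perturbed K) t
          \<and> growth_index (perturbed K) t \<le> max p0 pinf + 2 * \<delta>" if t: "0 < t" for t
  proof (cases "t \<in> {a..b}")
    case True
    then show ?thesis using mid[OF True] sigma_bounds[OF t] by (simp add: abs_le_iff)
  next
    case False
    have "0 \<le> K * weight t" using K weight_pos[OF t] by simp
    from weighted_mean_between[OF this, of "growth_index \<Phi> t" "\<sigma> t"]
    show ?thesis
      using outer[OF t] False sigma_bounds[OF t] delta_pos
      unfolding growth_index_perturbed[OF t] by fastforce
  qed
  with K show ?thesis by (intro exI[of _ K]) simp
qed

end

context young_limit_indices
begin

lemma exists_equivalent_with_close_exponents:
  assumes \<epsilon>: "0 < \<epsilon>"
  shows "\<exists>\<Psi>. young_function \<Psi> \<and> young_equiv \<Phi> \<Psi> \<and>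
           ereal (max p0 pinf) \<le> upper_index \<Psi> \<and> upper_index \<Psi> < ereal (max p0 pinf + \<epsilon>) \<and>
           ereal (min p0 pinf - \<epsilon>) < lower_index \<Psi> \<and> lower_index \<Psi> \<le> ereal (min p0 pinf)"
proof -
  interpret young_index_perturbation \<Phi> p0 pinf "\<epsilon> / 3"
    by unfold_locales (use \<epsilon> in simp)
  obtain K where K: "0 \<le> K"
    and bounds: "\<And>t. 0 < t \<Longrightarrow> min p0 pinf - 2 * (\<epsilon> / 3) \<le> growth_index (perturbed K) t
                      \<and> growth_index (perturbed K) t \<le> max p0 pinf + 2 * (\<epsilon> / 3)"
    using perturbed_index_bounds by blast
  note exponents = lebesgue_exponents_bounds[OF perturbed_index_at_0 perturbed_index_at_top[OF K] bounds]
  have "ereal (max p0 pinf + 2 * (\<epsilon> / 3)) < ereal (max p0 pinf + \<epsilon>)"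
    and "ereal (min p0 pinf - \<epsilon>) < ereal (min p0 pinf - 2 * (\<epsilon> / 3))"
    using \<epsilon> by simp_all
  with exponents perturbed_young[OF K] perturbed_equiv[OF K] show ?thesis
    by (intro exI[of _ "perturbed K"]) (blast intro: le_less_trans less_le_trans)
qed

end

theorem mainTheorem11:
  fixes \<Phi> :: "real \<Rightarrow> real" and p0 pinf :: real
  assumes "young_function \<Phi>"
    and "((\<lambda>t. t * right_deriv \<Phi> t / \<Phi> t) \<longlongrightarrow> p0) (at_right 0)"
    and "((\<lambda>t. t * right_deriv \<Phi> t / \<Phi> t) \<longlongrightarrow> pinf) at_top"
  shows "\<forall>\<epsilon>>0. \<exists>\<Psi>. young_function \<Psi> \<and> young_equiv \<Phi> \<Psi> \<and>
           ereal (max p0 pinf) \<le> upper_index \<Psi> \<and> upper_index \<Psi> < ereal (max p0 pinf + \<epsilon>) \<and>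
           ereal (min p0 pinf - \<epsilon>) < lower_index \<Psi> \<and> lower_index \<Psi> \<le> ereal (min p0 pinf)"
proof -
  interpret young_limit_indices \<Phi> p0 pinf
    using assms by unfold_locales (simp_all add: growth_index_def[abs_def])
  show ?thesis using exists_equivalent_with_close_exponents by blast
qed

end
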